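(* Let $\Delta=0$ be a passive orthonomic system as described in the context. For $j\in\{1,\dots,p\}$ consider the recursive schema \[ \mathfrak{D}_j=\frac{\partial}{\partial x_j}+\sum_{(k,L)\in\mathcal{S}_{e_j}}u^k_{L+e_j}\frac{\partial}{\partial u^k_L}+\sum_{(k,L)\in\mathcal{S}\setminus\mathcal{S}_{e_j}}\mathfrak{D}_M P^\alpha\,\frac{\partial}{\partial u^k_L}, \] where in the last sum, for $(k,L)\in\mathcal{S}\setminus\mathcal{S}_{e_j}$, $\alpha$ and $M$ are chosen with $(k,L+e_j)=(i^\alpha,J^\alpha+M)$, and $\mathfrak{D}_M=\mathfrak{D}_1^{M_1}\cdots\mathfrak{D}_p^{M_p}$ is evaluated by applying the same schema recursively. This recursive schema is well defined: for every $Q\in\mathcal{B}$ the evaluation of $\mathfrak{D}_jQ$ by the schema terminates.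
   Context: Jet space: coordinates $x_1,\dots,x_p$, $u^1,\dots,u^q$ and derivatives $u^j_K$, $K\in\mathbb{N}^p$ a multi-index; $e_i$ is the $i$-th unit multi-index. $\mathcal{A}$ is the ring of smooth functions of finitely many coordinates. Total derivatives $D_i=\partial/\partial x_i+\sum_{j,K}u^j_{K+e_i}\,\partial/\partial u^j_K$, $D_K=D_1^{K_1}\cdots D_p^{K_p}$. Choose $n$ pairs $(i^\alpha,J^\alpha)\in\{1,\dots,q\}\times\mathbb{N}^p$, $J^\alpha\neq0$. $u^j_K$ is principal if $(j,K)=(i^\alpha,J^\alpha+L)$ for some $\alpha,L$, otherwise parametric. $\mathcal{S}$ is the set of $(j,K)$ with $u^j_K$ parametric, and for $L\in\mathbb{N}^p$, $\mathcal{S}_L=\{(k,K):(k,K+L)\in\mathcal{S}\}$ (a subset of $\mathcal{S}$). $\mathcal{B}\subset\mathcal{A}$ consists of functions of the $x_i$ and parametric derivatives only. Fix a ranking $\le$: a total order on $\{1,\dots,q\}\times\mathbb{N}^p$ with $(j,K)\le(j,K+L)$ and $(i,J)\le(j,K)\iff(i,J+L)\le(j,K+L)$. The system is $u^{i^\alpha}_{J^\alpha}=P^\alpha$, $P^\alpha\in\mathcal{B}$, with $\Delta^\alpha=u^{i^\alpha}_{J^\alpha}-P^\alpha$; it is passive orthonomic if (i) $P^\alpha$ depends only on $u^j_K$ with $(j,K)<(i^\alpha,J^\alpha)$, and (ii) $(i^\alpha,J^\alpha+K)=(i^\beta,J^\beta+L)$ implies $D_KP^\alpha=D_LP^\beta$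 (modulo the system). Each $Q\in\mathcal{A}$ then has a unique reduced form $\widetilde{Q}\in\mathcal{B}$ congruent to $Q$ modulo the differential ideal generated by the $\Delta^\alpha$; the intrinsic operators are $\mathfrak{D}_KP=\widetilde{D_KP}$ for $P\in\mathcal{B}$, and the displayed schema is the formula these satisfy. *)

theory Defs
  imports Main
begin

text \<open>Independent variables x_i are indexed by a finite
linearly ordered type 'i (p = CARD('i), the order fixing D_M = D_1^M1 ... D_p^Mp);
dependent variables u^j by a finite type 'u (q = CARD('u)).  Multi-indices are
functions 'i => nat; a jet coordinate u^j_K is the pair (j, K).\<close>

type_synonym ('u, 'i) jvar = "'u \<times> ('i \<Rightarrow> nat)"

definition unitmi :: "'i \<Rightarrow> 'i \<Rightarrow> nat" where
  "unitmi i = (\<lambda>k. if k = i then 1 else 0)"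

definition madd :: "('i \<Rightarrow> nat) \<Rightarrow> ('i \<Rightarrow> nat) \<Rightarrow> 'i \<Rightarrow> nat" where
  "madd K L = (\<lambda>k. K k + L k)"

definition shift :: "'i \<Rightarrow> ('u, 'i) jvar \<Rightarrow> ('u, 'i) jvar" where
  "shift j v = (fst v, madd (snd v) (unitmi j))"

text \<open>The system has leading derivatives lead \<alpha> = (i^\<alpha>, J^\<alpha>) for \<alpha> in the finite index set A.\<close>
definition principal :: "'a set \<Rightarrow> ('a \<Rightarrow> ('u, 'i) jvar) \<Rightarrow> ('u, 'i) jvar \<Rightarrow> bool" where
  "principal A lead v \<longleftrightarrow> (\<exists>\<alpha>\<in>A. \<exists>L. v = (fst (lead \<alpha>), madd (snd (lead \<alpha>)) L))"

definition parametric_set :: "'a set \<Rightarrow> ('a \<Rightarrow> ('u, 'i) jvar) \<Rightarrow> ('u, 'i) jvar set" where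
  "parametric_set A lead = {v. \<not> principal A lead v}"

definition is_ranking :: "(('u, 'i) jvar \<Rightarrow> ('u, 'i) jvar \<Rightarrow> bool) \<Rightarrow> bool" where
  "is_ranking le \<longleftrightarrow>
     (\<forall>x. le x x) \<and> (\<forall>x y. le x y \<and> le y x \<longrightarrow> x = y) \<and>
     (\<forall>x y z. le x y \<and> le y z \<longrightarrow> le x z) \<and> (\<forall>x y. le x y \<or> le y x) \<and>
     (\<forall>j K L. le (j, K) (j, madd K L)) \<and>
     (\<forall>i J j K L. le (i, J) (j, K) \<longleftrightarrow> le (i, madd J L) (j, madd K L))"

text \<open>Orthonomic system with respect to the ranking: each right-hand side P^\<alpha> is an element
of B, abstracted by the (finite) set depP \<alpha> of parametric derivatives it depends on, and
condition (i): all of them are strictly lower in the ranking than (i^\<alpha>, J^\<alpha>).\<close>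
definition orthonomic ::
  "'a set \<Rightarrow> ('a \<Rightarrow> ('u, 'i) jvar) \<Rightarrow> ('a \<Rightarrow> ('u, 'i) jvar set)
   \<Rightarrow> (('u, 'i) jvar \<Rightarrow> ('u, 'i) jvar \<Rightarrow> bool) \<Rightarrow> bool" where
  "orthonomic A lead depP le \<longleftrightarrow>
     finite A \<and> is_ranking le \<and>
     (\<forall>\<alpha>\<in>A. snd (lead \<alpha>) \<noteq> (\<lambda>_. 0)) \<and>
     (\<forall>\<alpha>\<in>A. finite (depP \<alpha>) \<and> depP \<alpha> \<subseteq> parametric_set A lead \<and>
              (\<forall>v\<in>depP \<alpha>. le v (lead \<alpha>) \<and> v \<noteq> lead \<alpha>))"

definition valid_choice ::
  "'a set \<Rightarrow> ('a \<Rightarrow> ('u, 'i) jvar) \<Rightarrow> ('i \<Rightarrow> ('u, 'i) jvar \<Rightarrow> 'a \<times> ('i \<Rightarrow> nat)) \<Rightarrow> bool" where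
  "valid_choice A lead ch \<longleftrightarrow>
     (\<forall>j v. v \<in> parametric_set A lead \<and> principal A lead (shift j v) \<longrightarrow>
        fst (ch j v) \<in> A \<and>
        shift j v = (fst (lead (fst (ch j v))), madd (snd (lead (fst (ch j v)))) (snd (ch j v))))"

text \<open>Evaluation of the schema.  evalD j V W: evaluating D_j on a function of B whose
parametric dependencies are V terminates, the result depending on W.  evalDM M V W: the same
for D_M = D_1^M1 ... D_p^Mp, evaluated innermost (largest index) first.  Being inductive,
membership means existence of a finite evaluation (derivation) tree.\<close>
inductive evalD and evalDM for A lead depP ch where
  D: "(\<forall>v\<in>V. principal A lead (shift j v) \<longrightarrow>
          evalDM A lead depP ch (snd (ch j v)) (depP (fst (ch j v))) (Wf v))
      \<Longrightarrow> W = V \<union> {shift j v | v. v \<in> V \<and> \<not> principal A lead (shift j v)}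
              \<union> (\<Union>v\<in>{v\<in>V. principal A lead (shift j v)}. Wf v)
      \<Longrightarrow> evalD A lead depP ch j V W"
| DM0: "evalDM A lead depP ch (\<lambda>_. 0) V V"
| DMs: "M \<noteq> (\<lambda>_. 0) \<Longrightarrow> i = Max {k. M k \<noteq> 0}
      \<Longrightarrow> evalD A lead depP ch i V V'
      \<Longrightarrow> evalDM A lead depP ch (\<lambda>k. M k - unitmi i k) V' W
      \<Longrightarrow> evalDM A lead depP ch M V W"

end

theory Submission
  imports Defs "HOL.Topological_Spaces" "HOL-Library.Infinite_Set"
begin

text \<open>If D_j is applied to a derivative v with v + e_j principal, say v + e_j = J^\<alpha> + M, the
schema recurses into D_M P^\<alpha>, and every dependency d of P^\<alpha> satisfies d + M < J^\<alpha> + M = v + e_j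
because the ranking is compatible with shifts.  So all derivatives produced while evaluating
D_j on V stay below a common bound, and each recursive call of D_j happens strictly below the
call that spawned it.  By Dickson's lemma the ranking is a well-order, and termination follows
by well-founded induction on the bound, with an inner induction on |M| for the iterates D_M.\<close>

lemma nat_seq_incseq_subseq:
  fixes z :: "nat \<Rightarrow> nat"
  shows "\<exists>h. strict_mono h \<and> incseq (\<lambda>n. z (h n))"
proof -
  obtain f where f: "strict_mono f" "monoseq (\<lambda>n. z (f n))"
    using seq_monosub by blast
  show ?thesis
  proof (cases "incseq (\<lambda>n. z (f n))")
    case True
    with f show ?thesis by blast
  next
    case False
    with f(2) have dec: "decseq (\<lambda>n. z (f n))"
      by (simp add: monoseq_iff)
    define N where "N = (ARG_MIN (\<lambda>n. z (f n)) n. True)"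
    have "z (f N) \<le> z (f n)" for n
      unfolding N_def by (metis arg_min_nat_le)
    with dec have const: "z (f (n + N)) = z (f N)" for n
      unfolding decseq_def by (metis le_add2 le_antisym)
    have "strict_mono (\<lambda>n. f (n + N))"
      using f(1) by (simp add: strict_mono_def)
    moreover have "incseq (\<lambda>n. z (f (n + N)))"
      by (simp add: incseq_def const)
    ultimately show ?thesis by blast
  qed
qed

lemma incseq_subseq_coordinates:
  fixes y :: "nat \<Rightarrow> 'i \<Rightarrow> nat"
  assumes "finite S"
  shows "\<exists>h. strict_mono h \<and> (\<forall>k\<in>S. incseq (\<lambda>n. y (h n) k))"
  using assms
proof (induction S)
  case empty
  have "strict_mono (\<lambda>n::nat. n)" by (simp add: strict_mono_def)
  then show ?case by blast
next
  case (insert k S)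
  then obtain h where h: "strict_mono h" "\<forall>k\<in>S. incseq (\<lambda>n. y (h n) k)"
    by blast
  obtain g where g: "strict_mono g" "incseq (\<lambda>n. y (h (g n)) k)"
    using nat_seq_incseq_subseq[of "\<lambda>n. y (h n) k"] by blast
  have "incseq (\<lambda>n. y (h (g n)) k')" if "k' \<in> S" for k'
    using h(2) that g(1) unfolding incseq_def by (meson strict_mono_leD)
  with g have "strict_mono (h \<circ> g) \<and> (\<forall>k'\<in>insert k S. incseq (\<lambda>n. y ((h \<circ> g) n) k'))"
    using h(1) strict_mono_o by auto
  then show ?case by blast
qed

lemma dickson_jvar:
  fixes x :: "nat \<Rightarrow> ('u::finite, 'i::finite) jvar"
  shows "\<exists>m n. m < n \<and> fst (x m) = fst (x n) \<and> snd (x m) \<le> snd (x n)"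
proof -
  have "UNIV = (\<Union>u. {n. fst (x n) = u})" by auto
  then obtain u where inf: "infinite {n. fst (x n) = u}"
    by (metis finite_UN finite infinite_UNIV_nat)
  define g where "g = enumerate {n. fst (x n) = u}"
  have fst_g: "fst (x (g n)) = u" for n
    unfolding g_def using enumerate_in_set[OF inf] by auto
  have "strict_mono g"
    unfolding g_def strict_mono_def using enumerate_mono[OF _ inf] by blast
  obtain h where h: "strict_mono h" "\<forall>k\<in>UNIV. incseq (\<lambda>n. snd (x (g (h n))) k)"
    using incseq_subseq_coordinates[of UNIV "\<lambda>n. snd (x (g n))"] by auto
  have "g (h 0) < g (h 1)"
    using \<open>strict_mono g\<close> h(1) by (simp add: strict_mono_def)
  moreover have "snd (x (g (h 0))) \<le> snd (x (g (h 1)))"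
    using h(2) by (simp add: incseq_def le_fun_def)
  ultimately show ?thesis using fst_g by metis
qed

definition mshift :: "('u, 'i) jvar \<Rightarrow> ('i \<Rightarrow> nat) \<Rightarrow> ('u, 'i) jvar" where
  "mshift v M = (fst v, madd (snd v) M)"

lemma shift_eq_mshift: "shift j v = mshift v (unitmi j)"
  by (simp add: shift_def mshift_def)

lemma mshift_zero [simp]: "mshift v (\<lambda>_. 0) = v"
  by (simp add: mshift_def madd_def)

lemma mshift_mshift: "mshift (mshift v L) M = mshift v (madd L M)"
  by (simp add: mshift_def madd_def add.assoc)

lemma mshift_inj: "mshift v L = mshift w L \<Longrightarrow> v = w"
  by (simp add: mshift_def madd_def fun_eq_iff prod_eq_iff)

lemma madd_unitmi_diff:
  assumes "M i \<noteq> 0"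
  shows "madd (unitmi i) (\<lambda>k. M k - unitmi i k) = M"
  using assms by (auto simp: madd_def unitmi_def fun_eq_iff)

lemma sum_diff_unitmi_less:
  fixes M :: "'i::finite \<Rightarrow> nat"
  assumes "M i \<noteq> 0"
  shows "(\<Sum>k\<in>UNIV. M k - unitmi i k) < (\<Sum>k\<in>UNIV. M k)"
proof -
  have "(\<Sum>k\<in>UNIV. M k) = (\<Sum>k\<in>UNIV. (M k - unitmi i k) + unitmi i k)"
    using assms by (intro sum.cong) (auto simp: unitmi_def)
  also have "\<dots> = (\<Sum>k\<in>UNIV. M k - unitmi i k) + 1"
    by (simp add: sum.distrib unitmi_def)
  finally show ?thesis by simp
qed

locale ranking =
  fixes le :: "('u::finite, 'i::finite) jvar \<Rightarrow> ('u, 'i) jvar \<Rightarrow> bool"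
  assumes ranking: "is_ranking le"
begin

definition lt :: "('u, 'i) jvar \<Rightarrow> ('u, 'i) jvar \<Rightarrow> bool" where
  "lt x y \<longleftrightarrow> le x y \<and> x \<noteq> y"

sublocale rk: linorder le lt
proof unfold_locales
  fix x y z
  from ranking show "le x x" "le x y \<or> le y x"
    "le x y \<Longrightarrow> le y z \<Longrightarrow> le x z" "le x y \<Longrightarrow> le y x \<Longrightarrow> x = y"
    unfolding is_ranking_def by blast+
  then show "lt x y \<longleftrightarrow> le x y \<and> \<not> le y x"
    by (auto simp: lt_def)
qed

lemma le_mshift: "le v (mshift v L)"
  using ranking unfolding is_ranking_def mshift_def by (metis prod.collapse)

lemma le_mshift_mono: "le v w \<Longrightarrow> le (mshift v L) (mshift w L)"
  using ranking unfolding is_ranking_def mshift_def by (metis prod.collapse)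

lemma lt_mshift_mono: "lt v w \<Longrightarrow> lt (mshift v L) (mshift w L)"
  unfolding lt_def using le_mshift_mono mshift_inj by blast

lemma lt_shift: "lt v (shift j v)"
proof -
  have "snd v j \<noteq> snd (shift j v) j"
    by (simp add: shift_def madd_def unitmi_def)
  then show ?thesis
    using le_mshift[of v "unitmi j"] by (auto simp: lt_def shift_eq_mshift)
qed

lemma wf_lt: "wf {(x, y). lt x y}"
  unfolding wf_iff_no_infinite_down_chain
proof
  assume "\<exists>f. \<forall>n. (f (Suc n), f n) \<in> {(x, y). lt x y}"
  then obtain f where "\<And>n. lt (f (Suc n)) (f n)" by auto
  then have desc: "lt (f n) (f m)" if "m < n" for m n
    using that by (induction n) (auto intro: rk.less_trans simp: less_Suc_eq)
  obtain m n where mn: "m < n" "fst (f m) = fst (f n)" "snd (f m) \<le> snd (f n)"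
    using dickson_jvar[of f] by blast
  then have "f n = mshift (f m) (\<lambda>k. snd (f n) k - snd (f m) k)"
    by (auto simp: mshift_def madd_def le_fun_def fun_eq_iff prod_eq_iff)
  then have "le (f m) (f n)" by (metis le_mshift)
  with desc[OF mn(1)] show False by simp
qed

lemma ex_strict_upper_bound:
  assumes "finite T"
  shows "\<exists>r. \<forall>t\<in>T. lt t r"
proof -
  have "lt t (shift undefined (rk.Max (insert undefined T)))" if "t \<in> T" for t
  proof -
    have "le t (rk.Max (insert undefined T))"
      using assms that by (intro rk.Max_ge) auto
    then show ?thesis
      using lt_shift rk.le_less_trans by blast
  qed
  then show ?thesis by blast
qed

definition dominated :: "('u, 'i) jvar set \<Rightarrow> ('u, 'i) jvar set \<Rightarrow> ('i \<Rightarrow> nat) \<Rightarrow> bool" where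
  "dominated W V M \<longleftrightarrow> (\<forall>w\<in>W. \<exists>v\<in>V. le w (mshift v M))"

lemma dominated_mshift:
  assumes "dominated W V L" "w \<in> W"
  shows "\<exists>v\<in>V. le (mshift w M) (mshift v (madd L M))"
proof -
  from assms obtain v where "v \<in> V" "le w (mshift v L)"
    unfolding dominated_def by blast
  then show ?thesis
    using le_mshift_mono[of w "mshift v L" M] by (auto simp: mshift_mshift)
qed

end

locale orthonomic_system =
  fixes A :: "'a set"
    and lead :: "'a \<Rightarrow> ('u::finite, 'i::{finite,linorder}) jvar"
    and depP :: "'a \<Rightarrow> ('u, 'i) jvar set"
    and le :: "('u, 'i) jvar \<Rightarrow> ('u, 'i) jvar \<Rightarrow> bool"
    and ch :: "'i \<Rightarrow> ('u, 'i) jvar \<Rightarrow> 'a \<times> ('i \<Rightarrow> nat)"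
  assumes orthonomic: "orthonomic A lead depP le"
    and valid_choice: "valid_choice A lead ch"
begin

sublocale ranking le
  using orthonomic by unfold_locales (simp add: orthonomic_def)

definition admissible :: "('u, 'i) jvar set \<Rightarrow> bool" where
  "admissible V \<longleftrightarrow> finite V \<and> V \<subseteq> parametric_set A lead"

lemma admissible_depP: "\<alpha> \<in> A \<Longrightarrow> admissible (depP \<alpha>)"
  using orthonomic by (simp add: orthonomic_def admissible_def)

lemma lt_lead: "\<alpha> \<in> A \<Longrightarrow> d \<in> depP \<alpha> \<Longrightarrow> lt d (lead \<alpha>)"
  using orthonomic by (simp add: orthonomic_def lt_def)

lemma shift_eq_mshift_lead:
  assumes "v \<in> parametric_set A lead" "principal A lead (shift j v)"
  shows "fst (ch j v) \<in> A" "shift j v = mshift (lead (fst (ch j v))) (snd (ch j v))"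
  using valid_choice[unfolded valid_choice_def, rule_format, OF conjI[OF assms]]
  by (simp_all add: mshift_def)

text \<open>The bound on the output W is the invariant that keeps the successive applications
of D_i inside an evaluation of D_M below the same bound r.\<close>

definition D_terminates_below :: "('u, 'i) jvar \<Rightarrow> bool" where
  "D_terminates_below r \<longleftrightarrow>
     (\<forall>j V. admissible V \<longrightarrow> (\<forall>v\<in>V. lt (shift j v) r) \<longrightarrow>
        (\<exists>W. evalD A lead depP ch j V W \<and> admissible W \<and> dominated W V (unitmi j)))"

definition DM_terminates_below :: "('u, 'i) jvar \<Rightarrow> bool" where
  "DM_terminates_below r \<longleftrightarrow>
     (\<forall>M V. admissible V \<longrightarrow> (\<forall>v\<in>V. lt (mshift v M) r) \<longrightarrow>
        (\<exists>W. evalDM A lead depP ch M V W \<and> admissible W \<and> dominated W V M))"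

lemma DM_terminates_below_if_D:
  assumes D: "D_terminates_below r"
  shows "DM_terminates_below r"
  unfolding DM_terminates_below_def
proof (intro allI impI)
  fix M V
  assume "admissible V" "\<forall>v\<in>V. lt (mshift v M) r"
  then show "\<exists>W. evalDM A lead depP ch M V W \<and> admissible W \<and> dominated W V M"
  proof (induction "sum M UNIV" arbitrary: M V rule: less_induct)
    case less
    show ?case
    proof (cases "M = (\<lambda>_. 0)")
      case True
      then have "evalDM A lead depP ch M V V" "dominated V V M"
        by (auto simp: evalD_evalDM.DM0 dominated_def)
      with less.prems show ?thesis by blast
    next
      case False
      define i where "i = Max {k. M k \<noteq> 0}"
      define M' where "M' = (\<lambda>k. M k - unitmi i k)"
      have "{k. M k \<noteq> 0} \<noteq> {}"
        using False by auto
      then have "M i \<noteq> 0"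
        using Max_in[of "{k. M k \<noteq> 0}"] by (simp add: i_def)
      then have M: "madd (unitmi i) M' = M"
        unfolding M'_def by (rule madd_unitmi_diff)
      have "lt (shift i v) r" if "v \<in> V" for v
        using le_mshift[of "shift i v" M'] less.prems(2) that
        by (metis M shift_eq_mshift mshift_mshift rk.le_less_trans)
      with D less.prems(1) obtain V' where V': "evalD A lead depP ch i V V'" "admissible V'"
        "dominated V' V (unitmi i)"
        unfolding D_terminates_below_def by blast
      have "lt (mshift w M') r" if "w \<in> V'" for w
        using dominated_mshift[OF V'(3) that, of M'] less.prems(2) M rk.le_less_trans by metis
      then obtain W where W: "evalDM A lead depP ch M' V' W" "admissible W" "dominated W V' M'"
        using less.hyps[of M' V'] V'(2) sum_diff_unitmi_less[of M i] \<open>M i \<noteq> 0\<close>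
        unfolding M'_def by blast
      have "evalDM A lead depP ch M V W"
        using evalD_evalDM.DMs[OF False i_def V'(1)] W(1) unfolding M'_def .
      moreover have "dominated W V M"
        using W(3) dominated_mshift[OF V'(3)] M rk.order_trans
        unfolding dominated_def by metis
      ultimately show ?thesis using W(2) by blast
    qed
  qed
qed

lemma evalDM_rhs_exists:
  assumes "DM_terminates_below (shift j v)"
    and "v \<in> parametric_set A lead" "principal A lead (shift j v)"
  shows "\<exists>W. evalDM A lead depP ch (snd (ch j v)) (depP (fst (ch j v))) W \<and> admissible W
           \<and> (\<forall>w\<in>W. le w (shift j v))"
proof -
  obtain \<alpha> M where ch: "ch j v = (\<alpha>, M)" by force
  with shift_eq_mshift_lead[OF assms(2,3)]
  have "\<alpha> \<in> A" and v: "shift j v = mshift (lead \<alpha>) M" by simp_all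
  then have "\<forall>d\<in>depP \<alpha>. lt (mshift d M) (shift j v)"
    using lt_lead lt_mshift_mono by simp
  then obtain W where W: "evalDM A lead depP ch M (depP \<alpha>) W" "admissible W" "dominated W (depP \<alpha>) M"
    using assms(1) admissible_depP[OF \<open>\<alpha> \<in> A\<close>] unfolding DM_terminates_below_def by blast
  have "le w (shift j v)" if "w \<in> W" for w
  proof -
    from W(3) that obtain d where "d \<in> depP \<alpha>" "le w (mshift d M)"
      unfolding dominated_def by blast
    with lt_lead[OF \<open>\<alpha> \<in> A\<close>] show ?thesis
      by (metis v lt_mshift_mono rk.less_imp_le rk.order_trans)
  qed
  with W ch show ?thesis by auto
qed

lemma D_terminates_below_step:
  assumes "\<And>r'. lt r' r \<Longrightarrow> DM_terminates_below r'"
  shows "D_terminates_below r"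
  unfolding D_terminates_below_def
proof (intro allI impI)
  fix j V
  assume V: "admissible V" "\<forall>v\<in>V. lt (shift j v) r"
  let ?pr = "\<lambda>v. principal A lead (shift j v)"
  have "\<exists>W. evalDM A lead depP ch (snd (ch j v)) (depP (fst (ch j v))) W
          \<and> admissible W \<and> (\<forall>w\<in>W. le w (shift j v))" if "v \<in> V" "?pr v" for v
    using evalDM_rhs_exists[of j v] assms[of "shift j v"] V that by (auto simp: admissible_def)
  then obtain Wf where Wf: "\<And>v. v \<in> V \<Longrightarrow> ?pr v \<Longrightarrow>
      evalDM A lead depP ch (snd (ch j v)) (depP (fst (ch j v))) (Wf v)
      \<and> admissible (Wf v) \<and> (\<forall>w\<in>Wf v. le w (shift j v))"
    by metis
  define W where "W = V \<union> {shift j v | v. v \<in> V \<and> \<not> ?pr v} \<union> (\<Union>v\<in>{v\<in>V. ?pr v}. Wf v)"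
  have "evalD A lead depP ch j V W"
    unfolding W_def by (rule evalD_evalDM.D) (use Wf in auto)
  moreover have "finite {shift j v | v. v \<in> V \<and> \<not> ?pr v}"
    using V(1) by (auto simp: admissible_def intro: finite_subset[of _ "shift j ` V"])
  with V(1) Wf have "admissible W"
    by (auto simp: W_def admissible_def parametric_set_def)
  moreover have "\<exists>v\<in>V. le w (shift j v)" if "w \<in> W" for w
    using that unfolding W_def
    by (blast intro: rk.less_imp_le lt_shift rk.order_refl dest: Wf)
  then have "dominated W V (unitmi j)"
    by (simp add: dominated_def shift_eq_mshift)
  ultimately show "\<exists>W. evalD A lead depP ch j V W \<and> admissible W \<and> dominated W V (unitmi j)"
    by blast
qed

lemma DM_terminates_below: "DM_terminates_below r"
  using wf_lt
proof (induction r rule: wf_induct_rule)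
  case (less r)
  then have "D_terminates_below r"
    by (intro D_terminates_below_step) simp
  then show ?case by (rule DM_terminates_below_if_D)
qed

lemma evalD_exists:
  assumes "admissible V"
  shows "\<exists>W. evalD A lead depP ch j V W"
proof -
  have "finite (shift j ` V)"
    using assms by (simp add: admissible_def)
  then obtain r where "\<forall>t\<in>shift j ` V. lt t r"
    using ex_strict_upper_bound by blast
  moreover have "D_terminates_below r"
    using D_terminates_below_step DM_terminates_below by blast
  ultimately show ?thesis
    using assms unfolding D_terminates_below_def by blast
qed

end

theorem proposition2:
  fixes A :: "'a set"
    and lead :: "'a \<Rightarrow> 'u::finite \<times> ('i::{finite,linorder} \<Rightarrow> nat)"
    and depP :: "'a \<Rightarrow> ('u, 'i) jvar set"
    and le :: "('u, 'i) jvar \<Rightarrow> ('u, 'i) jvar \<Rightarrow> bool"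
    and ch :: "'i \<Rightarrow> ('u, 'i) jvar \<Rightarrow> 'a \<times> ('i \<Rightarrow> nat)"
  assumes "orthonomic A lead depP le"
    and "valid_choice A lead ch"
    and "finite V" and "V \<subseteq> parametric_set A lead"
  shows "\<exists>W. evalD A lead depP ch j V W"
proof -
  interpret orthonomic_system A lead depP le ch
    using assms(1,2) by unfold_locales
  show ?thesis
    using evalD_exists assms(3,4) by (simp add: admissible_def)
qed

end
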